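(* Let $\mathbf{f}\colon\mathbb{R}^n\to\mathbb{R}^n$ be a polynomial vector field, $\mathcal{X}_0=\{\mathbf{x}\mid \mathcal{I}(\mathbf{x})\le 0\}$ and $\mathcal{X}_u=\{\mathbf{x}\mid\mathcal{U}(\mathbf{x})\le 0\}$ with $\mathcal{I},\mathcal{U}\in\mathbb{R}[\mathbf{x}]$, and let $B\in\mathbb{R}[\mathbf{x}]$. Suppose there exist $\epsilon>0$, polynomials $v_{i,j}\in\mathbb{R}[\mathbf{x}]$ ($1\le i\le N_{B,\mathbf{f}}$, $0\le j\le i-1$) and sum-of-squares polynomials $\sigma,\sigma'$ such that (1) $-B(\mathbf{x})+\sigma(\mathbf{x})\mathcal{I}(\mathbf{x})$ is SOS; (2) for all $1\le i\le N_{B,\mathbf{f}}$, $-\mathcal{L}^i_{\mathbf{f}}B(\mathbf{x})+\sum_{j=0}^{i-1}v_{i,j}(\mathbf{x})\mathcal{L}^j_{\mathbf{f}}B(\mathbf{x})$ is SOS; (3) $B(\mathbf{x})+\sigma'(\mathbf{x})\mathcal{U}(\mathbf{x})-\epsilon$ is SOS. Then $B$ is an invariant barrier certificate of $\dot{\mathbf{x}}=\mathbf{f}(\mathbf{x})$ with respect to $\mathcal{X}_0$ and $\mathcal{X}_u$.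
   Context: A polynomial is SOS (sum of squares) if it equals $\sum_k g_k^2$ for some polynomials $g_k$. The Lie derivatives of $B$ along $\mathbf{f}$ are $\mathcal{L}^0_{\mathbf{f}}B=B$ and $\mathcal{L}^k_{\mathbf{f}}B=\langle \nabla \mathcal{L}^{k-1}_{\mathbf{f}}B,\mathbf{f}\rangle$ for $k>0$. $N_{B,\mathbf{f}}\in\mathbb{N}^+$ denotes the completeness threshold: the minimal index $i$ such that $\mathcal{L}^{i+1}_{\mathbf{f}}B$ belongs to the polynomial ideal generated by $\mathcal{L}^0_{\mathbf{f}}B,\dots,\mathcal{L}^i_{\mathbf{f}}B$. A polynomial $B$ is an invariant barrier certificate (w.r.t. $\mathcal{X}_0,\mathcal{X}_u$) iff (initial) $B(\mathbf{x})\le 0$ for all $\mathbf{x}\in\mathcal{X}_0$; (consecution) for all $\mathbf{x}\in\mathbb{R}^n$ and all $1\le i\le N_{B,\mathbf{f}}$: if $\mathcal{L}^j_{\mathbf{f}}B(\mathbf{x})=0$ for all $0\le j\le i-1$, then $\mathcal{L}^i_{\mathbf{f}}B(\mathbf{x})\le 0$; (separation) $B(\mathbf{x})>0$ for all $\mathbf{x}\in\mathcal{X}_u$. *)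

theory Defs
  imports "HOL-Analysis.Analysis"
begin

text \<open>Polynomial functions on R^n (n = CARD('n)), generated by constants,
coordinate projections, sums and products. Over the infinite field R,
polynomials are identified with the functions they induce.\<close>
inductive polyfun :: "(real^'n \<Rightarrow> real) \<Rightarrow> bool" where
  pf_const: "polyfun (\<lambda>x. c)"
| pf_coord: "polyfun (\<lambda>x. x $ i)"
| pf_add: "polyfun p \<Longrightarrow> polyfun q \<Longrightarrow> polyfun (\<lambda>x. p x + q x)"
| pf_mult: "polyfun p \<Longrightarrow> polyfun q \<Longrightarrow> polyfun (\<lambda>x. p x * q x)"

definition poly_field :: "(real^'n \<Rightarrow> real^'n) \<Rightarrow> bool" where
  "poly_field f \<longleftrightarrow> (\<forall>i. polyfun (\<lambda>x. f x $ i))"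

definition sos :: "(real^'n \<Rightarrow> real) \<Rightarrow> bool" where
  "sos p \<longleftrightarrow> (\<exists>gs. (\<forall>g\<in>set gs. polyfun g) \<and> p = (\<lambda>x. \<Sum>g\<leftarrow>gs. (g x)^2))"

definition lie :: "(real^'n \<Rightarrow> real^'n) \<Rightarrow> (real^'n \<Rightarrow> real) \<Rightarrow> real^'n \<Rightarrow> real" where
  "lie f B = (\<lambda>x. frechet_derivative B (at x) (f x))"

primrec lie_iter :: "(real^'n \<Rightarrow> real^'n) \<Rightarrow> (real^'n \<Rightarrow> real) \<Rightarrow> nat \<Rightarrow> real^'n \<Rightarrow> real" where
  "lie_iter f B 0 = B"
| "lie_iter f B (Suc k) = lie f (lie_iter f B k)"

definition in_ideal :: "(real^'n \<Rightarrow> real) \<Rightarrow> (nat \<Rightarrow> real^'n \<Rightarrow> real) \<Rightarrow> nat \<Rightarrow> bool" where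
  "in_ideal p q i \<longleftrightarrow> (\<exists>g. (\<forall>j\<le>i. polyfun (g j)) \<and> p = (\<lambda>x. \<Sum>j\<le>i. g j x * q j x))"

text \<open>Completeness threshold N_{B,f}: the least positive i such that the (i+1)-st Lie
derivative lies in the ideal generated by the 0th..ith ones.\<close>
definition threshold :: "(real^'n \<Rightarrow> real^'n) \<Rightarrow> (real^'n \<Rightarrow> real) \<Rightarrow> nat" where
  "threshold f B = (LEAST i. 1 \<le> i \<and> in_ideal (lie_iter f B (Suc i)) (lie_iter f B) i)"

definition invariant_barrier ::
  "(real^'n \<Rightarrow> real^'n) \<Rightarrow> (real^'n \<Rightarrow> real) \<Rightarrow> (real^'n) set \<Rightarrow> (real^'n) set \<Rightarrow> bool" where
  "invariant_barrier f B X0 Xu \<longleftrightarrow>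
     (\<forall>x\<in>X0. B x \<le> 0) \<and>
     (\<forall>x. \<forall>i. 1 \<le> i \<and> i \<le> threshold f B \<longrightarrow>
        (\<forall>j. j \<le> i - 1 \<longrightarrow> lie_iter f B j x = 0) \<longrightarrow> lie_iter f B i x \<le> 0) \<and>
     (\<forall>x\<in>Xu. B x > 0)"

end

theory Submission
  imports Defs
begin

lemma sos_nonneg: "sos p \<Longrightarrow> p x \<ge> 0"
  unfolding sos_def by (auto intro!: sum_list_nonneg)

lemma sos_certificate_nonpos:
  assumes "sos \<sigma>" and "sos (\<lambda>x. - p x + \<sigma> x * g x)" and "g x \<le> 0"
  shows "p x \<le> 0"
proof -
  have "\<sigma> x * g x \<le> 0"
    using sos_nonneg[OF assms(1)] assms(3) by (rule mult_nonneg_nonpos)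
  with sos_nonneg[OF assms(2), of x] show ?thesis by simp
qed

lemma sos_certificate_pos:
  assumes "sos \<sigma>" and "sos (\<lambda>x. p x + \<sigma> x * g x - \<epsilon>)" and "\<epsilon> > 0" and "g x \<le> 0"
  shows "p x > 0"
proof -
  have "\<sigma> x * g x \<le> 0"
    using sos_nonneg[OF assms(1)] assms(4) by (rule mult_nonneg_nonpos)
  with sos_nonneg[OF assms(2), of x] assms(3) show ?thesis by simp
qed

lemma sos_ideal_certificate_nonpos:
  assumes "sos (\<lambda>x. - p x + (\<Sum>j\<in>J. v j x * q j x))" and "\<forall>j\<in>J. q j x = 0"
  shows "p x \<le> 0"
  using sos_nonneg[OF assms(1), of x] assms(2) by simp

theorem theorem5:
  fixes f :: "real^'n \<Rightarrow> real^'n"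
    and I U B \<sigma> \<sigma>' :: "real^'n \<Rightarrow> real"
    and v :: "nat \<Rightarrow> nat \<Rightarrow> real^'n \<Rightarrow> real"
    and \<epsilon> :: real
  assumes "poly_field f"
    and "polyfun I" and "polyfun U" and "polyfun B"
    and "\<epsilon> > 0"
    and "\<forall>i j. 1 \<le> i \<and> i \<le> threshold f B \<and> j \<le> i - 1 \<longrightarrow> polyfun (v i j)"
    and "sos \<sigma>" and "sos \<sigma>'"
    and "sos (\<lambda>x. - B x + \<sigma> x * I x)"
    and "\<forall>i. 1 \<le> i \<and> i \<le> threshold f B \<longrightarrow>
           sos (\<lambda>x. - lie_iter f B i x + (\<Sum>j\<le>i - 1. v i j x * lie_iter f B j x))"
    and "sos (\<lambda>x. B x + \<sigma>' x * U x - \<epsilon>)"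
  shows "invariant_barrier f B {x. I x \<le> 0} {x. U x \<le> 0}"
  unfolding invariant_barrier_def
proof (intro conjI ballI allI impI)
  \<comment> \<open>The certificates are only evaluated pointwise.\<close>
  fix x assume "x \<in> {x. I x \<le> 0}"
  then show "B x \<le> 0" using sos_certificate_nonpos[OF assms(7,9)] by simp
next
  fix x assume "x \<in> {x. U x \<le> 0}"
  then show "B x > 0" using sos_certificate_pos[OF assms(8,11,5)] by simp
next
  fix x i assume "1 \<le> i \<and> i \<le> threshold f B"
    and "\<forall>j. j \<le> i - 1 \<longrightarrow> lie_iter f B j x = 0"
  then show "lie_iter f B i x \<le> 0"
    using sos_ideal_certificate_nonpos[OF assms(10)[rule_format]] by simp
qed

end
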